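(* Let $\pi_k$ be a current policy, let $\pi$ be any policy, and let $\pi_{\mathrm{ref}}$ be a reference policy. Then $$J(\pi)-J(\pi_k)\;\ge\;\frac{1}{1-\gamma}\,\mathbb E_{(s,a)\sim d^{\pi_{\mathrm{ref}}}}\!\left[\frac{\pi(a\mid s)}{\pi_{\mathrm{ref}}(a\mid s)}A^{\pi_k}(s,a)\right]\;-\;\frac{2\gamma C^{\pi,\pi_k}}{(1-\gamma)^2}\,\mathbb E_{s\sim d^{\pi_{\mathrm{ref}}}}\big[\mathrm{TV}(\pi,\pi_{\mathrm{ref}})(s)\big],$$ where $C^{\pi,\pi_k}=\max_{s\in\mathcal S}\big|\mathbb E_{a\sim\pi(\cdot\mid s)}[A^{\pi_k}(s,a)]\big|$.
   Context: We work with an infinite-horizon discounted Markov decision process $(\mathcal S,\mathcal A,p,r,\rho_0,\gamma)$ with state space $\mathcal S$, action space $\mathcal A$, transition kernel $p(\cdot\mid s,a)$, reward $r:\mathcal S\times\mathcal A\to\mathbb R$, initial state distribution $\rho_0$, and discount $\gamma\in[0,1)$. A (stationary) policy $\pi$ maps each state $s$ to a distribution $\pi(\cdot\mid s)$ over actions. The objective is $J(\pi)=\mathbb E_{\tau\sim\pi}[\sum_{t=0}^\infty\gamma^t r(s_t,a_t)]$, where trajectories are generated by $s_0\sim\rho_0$, $a_t\sim\pi(\cdot\mid s_t)$, $s_{t+1}\sim p(\cdot\mid s_t,a_t)$. The normalized discounted state visitation distribution is $d^{\pi}(s)=(1-\gamma)\sum_{t=0}^\infty\gamma^t\,\mathbb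 P(s_t=s\mid\rho_0,\pi,p)$, and $d^{\pi}(s,a)=d^{\pi}(s)\pi(a\mid s)$ is the corresponding state-action distribution. $V^{\pi}(s)$ and $Q^{\pi}(s,a)$ are the usual discounted state and state-action value functions of $\pi$, and $A^{\pi}(s,a)=Q^{\pi}(s,a)-V^{\pi}(s)$ is the advantage function. $\mathrm{TV}(\pi,\pi')(s)$ is the total variation distance between $\pi(\cdot\mid s)$ and $\pi'(\cdot\mid s)$. *)

theory Defs
  imports Complex_Main
begin

text \<open>A transition kernel is p s a s' = P(s' | s, a); a policy is pol s a = pi(a | s);
  a distribution on a finite type is a nonnegative function summing to 1.\<close>

definition is_dist :: "('x::finite \<Rightarrow> real) \<Rightarrow> bool" where
  "is_dist \<mu> \<longleftrightarrow> (\<forall>x. 0 \<le> \<mu> x) \<and> (\<Sum>x\<in>UNIV. \<mu> x) = 1"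

definition is_policy :: "('s::finite \<Rightarrow> 'a::finite \<Rightarrow> real) \<Rightarrow> bool" where
  "is_policy pol \<longleftrightarrow> (\<forall>s. is_dist (pol s))"

definition is_kernel :: "('s::finite \<Rightarrow> 'a::finite \<Rightarrow> 's \<Rightarrow> real) \<Rightarrow> bool" where
  "is_kernel p \<longleftrightarrow> (\<forall>s a. is_dist (p s a))"

fun state_dist :: "('s::finite \<Rightarrow> 'a::finite \<Rightarrow> 's \<Rightarrow> real) \<Rightarrow> ('s \<Rightarrow> real)
    \<Rightarrow> ('s \<Rightarrow> 'a \<Rightarrow> real) \<Rightarrow> nat \<Rightarrow> 's \<Rightarrow> real" where
  "state_dist p \<mu> pol 0 s = \<mu> s"
| "state_dist p \<mu> pol (Suc t) s' =
     (\<Sum>s\<in>UNIV. \<Sum>a\<in>UNIV. state_dist p \<mu> pol t s * pol s a * p s a s')"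

definition visit :: "('s::finite \<Rightarrow> 'a::finite \<Rightarrow> 's \<Rightarrow> real) \<Rightarrow> ('s \<Rightarrow> real) \<Rightarrow> real
    \<Rightarrow> ('s \<Rightarrow> 'a \<Rightarrow> real) \<Rightarrow> 's \<Rightarrow> real" where
  "visit p \<mu> \<gamma> pol s = (1 - \<gamma>) * (\<Sum>t. \<gamma> ^ t * state_dist p \<mu> pol t s)"

definition disc_return :: "('s::finite \<Rightarrow> 'a::finite \<Rightarrow> 's \<Rightarrow> real) \<Rightarrow> ('s \<Rightarrow> 'a \<Rightarrow> real)
    \<Rightarrow> ('s \<Rightarrow> real) \<Rightarrow> real \<Rightarrow> ('s \<Rightarrow> 'a \<Rightarrow> real) \<Rightarrow> real" where
  "disc_return p r \<mu> \<gamma> pol =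
     (\<Sum>t. \<gamma> ^ t * (\<Sum>s\<in>UNIV. \<Sum>a\<in>UNIV. state_dist p \<mu> pol t s * pol s a * r s a))"

definition J_obj where
  "J_obj p r \<rho>0 \<gamma> pol = disc_return p r \<rho>0 \<gamma> pol"

definition V_fun where
  "V_fun p r \<gamma> pol s = disc_return p r (\<lambda>s'. if s' = s then 1 else 0) \<gamma> pol"

definition Q_fun where
  "Q_fun p r \<gamma> pol s a = r s a + \<gamma> * (\<Sum>s'\<in>UNIV. p s a s' * V_fun p r \<gamma> pol s')"

definition Adv where
  "Adv p r \<gamma> pol s a = Q_fun p r \<gamma> pol s a - V_fun p r \<gamma> pol s"

definition TV :: "('s \<Rightarrow> 'a::finite \<Rightarrow> real) \<Rightarrow> ('s \<Rightarrow> 'a \<Rightarrow> real) \<Rightarrow> 's \<Rightarrow> real" where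
  "TV pol pol' s = (1/2) * (\<Sum>a\<in>UNIV. \<bar>pol s a - pol' s a\<bar>)"

definition C_const where
  "C_const p r \<gamma> pol polk =
     Max (range (\<lambda>s. \<bar>\<Sum>a\<in>UNIV. pol s a * Adv p r \<gamma> polk s a\<bar>))"

end

theory Submission
  imports Defs
begin

text \<open>
  By the performance difference lemma, J(pi) - J(pi_k) = 1/(1-gamma) E_{s ~ d^pi}[f s] with
  f s = E_{a ~ pi(.|s)} A^{pi_k}(s,a), and under the support hypothesis the importance-weighted
  term is the same expression with d^{pi_ref} in place of d^pi. As |f| <= C, the two differ by at
  most C/(1-gamma) ||d^pi - d^{pi_ref}||_1. The transition kernel is an l1-contraction, so one step
  of the chain increases the l1 distance between the time-t state distributions of pi and pi_ref
  by at most 2 E_{d_t^{pi_ref}}[TV(pi, pi_ref)]; summing with weights gamma^t gives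
  ||d^pi - d^{pi_ref}||_1 <= 2 gamma/(1-gamma) E_{d^{pi_ref}}[TV(pi, pi_ref)].
\<close>

lemma is_dist_nonneg: "is_dist \<mu> \<Longrightarrow> 0 \<le> \<mu> x"
  unfolding is_dist_def by auto

lemma is_dist_le_one:
  assumes "is_dist \<mu>"
  shows "\<mu> x \<le> 1"
proof -
  have "\<mu> x \<le> (\<Sum>y\<in>UNIV. \<mu> y)"
    using assms unfolding is_dist_def by (intro member_le_sum) auto
  then show ?thesis
    using assms unfolding is_dist_def by simp
qed

lemma is_dist_indicator: "is_dist (\<lambda>x. if x = x0 then 1 else 0)"
  unfolding is_dist_def by simp

lemma abs_sum_dist_mult_le:
  assumes "is_dist \<mu>"
  shows "\<bar>\<Sum>x\<in>UNIV. \<mu> x * g x\<bar> \<le> (\<Sum>x\<in>UNIV. \<bar>g x\<bar>)"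
proof -
  have "\<bar>\<Sum>x\<in>UNIV. \<mu> x * g x\<bar> \<le> (\<Sum>x\<in>UNIV. \<bar>\<mu> x * g x\<bar>)"
    by (rule sum_abs)
  also have "\<dots> \<le> (\<Sum>x\<in>UNIV. \<bar>g x\<bar>)"
    using is_dist_nonneg[OF assms] is_dist_le_one[OF assms]
    by (intro sum_mono) (simp add: abs_mult mult_left_le_one_le)
  finally show ?thesis .
qed

lemma sum_abs_diff_dist_le_2:
  assumes "is_dist \<mu>" and "is_dist \<nu>"
  shows "(\<Sum>x\<in>UNIV. \<bar>\<mu> x - \<nu> x\<bar>) \<le> 2"
proof -
  have "(\<Sum>x\<in>UNIV. \<bar>\<mu> x - \<nu> x\<bar>) \<le> (\<Sum>x\<in>UNIV. \<mu> x + \<nu> x)"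
    using is_dist_nonneg[OF assms(1)] is_dist_nonneg[OF assms(2)]
    by (intro sum_mono) (simp add: abs_le_iff)
  also have "\<dots> = 2"
    using assms unfolding is_dist_def by (simp add: sum.distrib)
  finally show ?thesis .
qed

lemma abs_sum_mult_diff_le:
  fixes a b f :: "'x \<Rightarrow> real"
  assumes "\<And>x. \<bar>f x\<bar> \<le> C"
  shows "\<bar>(\<Sum>x\<in>A. a x * f x) - (\<Sum>x\<in>A. b x * f x)\<bar> \<le> C * (\<Sum>x\<in>A. \<bar>a x - b x\<bar>)"
proof -
  have "\<bar>(\<Sum>x\<in>A. a x * f x) - (\<Sum>x\<in>A. b x * f x)\<bar> = \<bar>\<Sum>x\<in>A. (a x - b x) * f x\<bar>"
    by (simp add: sum_subtractf left_diff_distrib)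
  also have "\<dots> \<le> (\<Sum>x\<in>A. \<bar>a x - b x\<bar> * C)"
    using assms by (intro order_trans[OF sum_abs] sum_mono) (simp add: abs_mult mult_left_mono)
  also have "\<dots> = C * (\<Sum>x\<in>A. \<bar>a x - b x\<bar>)"
    by (simp add: sum_distrib_left mult.commute)
  finally show ?thesis .
qed

lemma sum_importance_weighted:
  fixes \<mu> \<nu> g :: "'x \<Rightarrow> real"
  assumes "\<And>x. x \<in> A \<Longrightarrow> \<nu> x = 0 \<Longrightarrow> \<mu> x = 0"
  shows "(\<Sum>x\<in>A. \<nu> x * (\<mu> x / \<nu> x * g x)) = (\<Sum>x\<in>A. \<mu> x * g x)"
  using assms by (intro sum.cong refl) auto

lemma summable_power_mult_bounded:
  fixes \<gamma> :: real
  assumes "0 \<le> \<gamma>" and "\<gamma> < 1" and "\<And>t. \<bar>g t\<bar> \<le> B"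
  shows "summable (\<lambda>t. \<gamma> ^ t * g t)"
proof (rule summable_comparison_test)
  have "norm (\<gamma> ^ t * g t) \<le> B * \<gamma> ^ t" for t
    using mult_right_mono[OF assms(3)[of t], of "\<gamma> ^ t"] assms(1) by (simp add: abs_mult mult.commute)
  then show "\<exists>N. \<forall>t\<ge>N. norm (\<gamma> ^ t * g t) \<le> B * \<gamma> ^ t"
    by blast
  show "summable (\<lambda>t. B * \<gamma> ^ t)"
    using assms by (intro summable_mult summable_geometric) auto
qed

lemma discounted_suminf_le_of_step_le:
  fixes \<gamma> :: real and n c :: "nat \<Rightarrow> real"
  assumes "0 \<le> \<gamma>" and sn: "summable (\<lambda>t. \<gamma> ^ t * n t)" and sc: "summable (\<lambda>t. \<gamma> ^ t * c t)"
    and "n 0 = 0" and step: "\<And>t. n (Suc t) \<le> n t + c t"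
  shows "(1 - \<gamma>) * (\<Sum>t. \<gamma> ^ t * n t) \<le> \<gamma> * (\<Sum>t. \<gamma> ^ t * c t)"
proof -
  have "(\<Sum>t. \<gamma> ^ t * n t) = (\<Sum>t. \<gamma> ^ Suc t * n (Suc t))"
    using suminf_split_head[OF sn] \<open>n 0 = 0\<close> by simp
  also have "\<dots> \<le> (\<Sum>t. \<gamma> * (\<gamma> ^ t * n t) + \<gamma> * (\<gamma> ^ t * c t))"
  proof (rule suminf_le)
    show "\<gamma> ^ Suc t * n (Suc t) \<le> \<gamma> * (\<gamma> ^ t * n t) + \<gamma> * (\<gamma> ^ t * c t)" for t
      using mult_left_mono[OF step[of t], of "\<gamma> ^ Suc t"] \<open>0 \<le> \<gamma>\<close> by (simp add: algebra_simps)
    show "summable (\<lambda>t. \<gamma> ^ Suc t * n (Suc t))"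
      using summable_ignore_initial_segment[OF sn, of 1] by simp
    show "summable (\<lambda>t. \<gamma> * (\<gamma> ^ t * n t) + \<gamma> * (\<gamma> ^ t * c t))"
      by (intro summable_add summable_mult sn sc)
  qed
  also have "\<dots> = \<gamma> * (\<Sum>t. \<gamma> ^ t * n t) + \<gamma> * (\<Sum>t. \<gamma> ^ t * c t)"
    by (simp add: suminf_add[symmetric] summable_mult sn sc suminf_mult)
  finally show ?thesis
    by (simp add: algebra_simps)
qed

lemma state_dist_Suc_expectation:
  "(\<Sum>s'\<in>UNIV. state_dist p \<mu> pol (Suc t) s' * g s') =
   (\<Sum>s\<in>UNIV. state_dist p \<mu> pol t s * (\<Sum>a\<in>UNIV. pol s a * (\<Sum>s'\<in>UNIV. p s a s' * g s')))"
proof -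
  have "(\<Sum>s'\<in>UNIV. state_dist p \<mu> pol (Suc t) s' * g s') =
    (\<Sum>s'\<in>UNIV. \<Sum>s\<in>UNIV. \<Sum>a\<in>UNIV. state_dist p \<mu> pol t s * (pol s a * (p s a s' * g s')))"
    by (simp add: sum_distrib_right mult.assoc)
  also have "\<dots> = (\<Sum>s\<in>UNIV. \<Sum>a\<in>UNIV. \<Sum>s'\<in>UNIV. state_dist p \<mu> pol t s * (pol s a * (p s a s' * g s')))"
    by (subst sum.swap) (intro sum.cong refl sum.swap)
  finally show ?thesis
    by (simp add: sum_distrib_left)
qed

lemma is_dist_state_dist:
  assumes "is_kernel p" and "is_policy pol" and "is_dist \<mu>"
  shows "is_dist (state_dist p \<mu> pol t)"
proof (induction t)
  case 0
  then show ?case using assms(3) by simp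
next
  case (Suc t)
  have "(\<Sum>s'\<in>UNIV. state_dist p \<mu> pol (Suc t) s') = (\<Sum>s\<in>UNIV. state_dist p \<mu> pol t s)"
    using state_dist_Suc_expectation[of p \<mu> pol t "\<lambda>_. 1"] assms(1,2)
    by (simp add: is_kernel_def is_policy_def is_dist_def)
  moreover have "0 \<le> state_dist p \<mu> pol (Suc t) s'" for s'
    using Suc assms(1,2) by (simp add: is_kernel_def is_policy_def is_dist_def sum_nonneg)
  ultimately show ?case
    using Suc unfolding is_dist_def by simp
qed

lemma state_dist_linear_init:
  "state_dist p \<mu> pol t s' =
   (\<Sum>s0\<in>UNIV. \<mu> s0 * state_dist p (\<lambda>s. if s = s0 then 1 else 0) pol t s')"
proof (induction t arbitrary: s')
  case 0
  then show ?case
    by (simp add: if_distrib[of "\<lambda>x. _ * x"] cong: if_cong)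
next
  case (Suc t)
  let ?\<delta> = "\<lambda>s0. state_dist p (\<lambda>s. if s = s0 then 1 else 0) pol t"
  have "state_dist p \<mu> pol (Suc t) s' =
    (\<Sum>s\<in>UNIV. \<Sum>a\<in>UNIV. \<Sum>s0\<in>UNIV. \<mu> s0 * (?\<delta> s0 s * pol s a * p s a s'))"
    using Suc by (simp add: sum_distrib_right mult.assoc)
  also have "\<dots> = (\<Sum>s\<in>UNIV. \<Sum>s0\<in>UNIV. \<Sum>a\<in>UNIV. \<mu> s0 * (?\<delta> s0 s * pol s a * p s a s'))"
    by (intro sum.cong refl sum.swap)
  also have "\<dots> = (\<Sum>s0\<in>UNIV. \<Sum>s\<in>UNIV. \<Sum>a\<in>UNIV. \<mu> s0 * (?\<delta> s0 s * pol s a * p s a s'))"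
    by (rule sum.swap)
  finally show ?case
    by (simp add: sum_distrib_left)
qed

lemma summable_discounted_expectation:
  assumes "is_kernel p" and "is_policy pol" and "is_dist \<mu>" and "0 \<le> \<gamma>" and "\<gamma> < 1"
  shows "summable (\<lambda>t. \<gamma> ^ t * (\<Sum>s\<in>UNIV. state_dist p \<mu> pol t s * g s))"
  by (rule summable_power_mult_bounded[OF assms(4,5) abs_sum_dist_mult_le[OF is_dist_state_dist[OF assms(1-3)]]])

lemma summable_discounted_state_dist:
  assumes "is_kernel p" and "is_policy pol" and "is_dist \<mu>" and "0 \<le> \<gamma>" and "\<gamma> < 1"
  shows "summable (\<lambda>t. \<gamma> ^ t * state_dist p \<mu> pol t s)"
  using summable_discounted_expectation[OF assms, of "\<lambda>s'. if s' = s then 1 else 0"]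
  by (simp add: if_distrib[of "\<lambda>x. _ * x"] cong: if_cong)

lemma disc_return_eq_suminf_expectation:
  "disc_return p r \<mu> \<gamma> pol =
   (\<Sum>t. \<gamma> ^ t * (\<Sum>s\<in>UNIV. state_dist p \<mu> pol t s * (\<Sum>a\<in>UNIV. pol s a * r s a)))"
  unfolding disc_return_def by (simp add: sum_distrib_left mult.assoc)

lemma disc_return_eq_sum_V_fun:
  assumes "is_kernel p" and "is_policy pol" and "0 \<le> \<gamma>" and "\<gamma> < 1"
  shows "disc_return p r \<mu> \<gamma> pol = (\<Sum>s0\<in>UNIV. \<mu> s0 * V_fun p r \<gamma> pol s0)"
proof -
  define R where "R s = (\<Sum>a\<in>UNIV. pol s a * r s a)" for s
  define E where "E \<mu>' t = \<gamma> ^ t * (\<Sum>s\<in>UNIV. state_dist p \<mu>' pol t s * R s)" for \<mu>' t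
  let ?\<delta> = "\<lambda>s0 s. if s = s0 then 1 else 0"
  have E_linear: "E \<mu> t = (\<Sum>s0\<in>UNIV. \<mu> s0 * E (?\<delta> s0) t)" for t
    unfolding E_def
    by (subst state_dist_linear_init, simp only: sum_distrib_left sum_distrib_right, subst sum.swap)
      (simp add: mult_ac)
  have summable_E: "summable (E (?\<delta> s0))" for s0
    unfolding E_def using assms by (intro summable_discounted_expectation is_dist_indicator)
  have "disc_return p r \<mu> \<gamma> pol = (\<Sum>t. E \<mu> t)"
    unfolding disc_return_eq_suminf_expectation E_def R_def ..
  also have "\<dots> = (\<Sum>t. \<Sum>s0\<in>UNIV. \<mu> s0 * E (?\<delta> s0) t)"
    unfolding E_linear ..
  also have "\<dots> = (\<Sum>s0\<in>UNIV. \<mu> s0 * (\<Sum>t. E (?\<delta> s0) t))"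
    using summable_E by (simp add: suminf_sum summable_mult suminf_mult)
  also have "\<dots> = (\<Sum>s0\<in>UNIV. \<mu> s0 * V_fun p r \<gamma> pol s0)"
    unfolding V_fun_def disc_return_eq_suminf_expectation E_def R_def ..
  finally show ?thesis .
qed

lemma visit_nonneg:
  assumes "is_kernel p" and "is_policy pol" and "is_dist \<mu>" and "0 \<le> \<gamma>" and "\<gamma> < 1"
  shows "0 \<le> visit p \<mu> \<gamma> pol s"
  unfolding visit_def using assms
  by (intro mult_nonneg_nonneg suminf_nonneg summable_discounted_state_dist)
    (auto intro: is_dist_nonneg is_dist_state_dist)

lemma sum_visit_mult:
  assumes "is_kernel p" and "is_policy pol" and "is_dist \<mu>" and "0 \<le> \<gamma>" and "\<gamma> < 1"
  shows "(\<Sum>s\<in>UNIV. visit p \<mu> \<gamma> pol s * g s) =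
         (1 - \<gamma>) * (\<Sum>t. \<gamma> ^ t * (\<Sum>s\<in>UNIV. state_dist p \<mu> pol t s * g s))"
proof -
  note summable = summable_discounted_state_dist[OF assms]
  have "(\<Sum>s\<in>UNIV. visit p \<mu> \<gamma> pol s * g s) =
      (1 - \<gamma>) * (\<Sum>s\<in>UNIV. \<Sum>t. \<gamma> ^ t * state_dist p \<mu> pol t s * g s)"
    unfolding visit_def using summable by (simp add: sum_distrib_left suminf_mult2 mult.assoc)
  also have "(\<Sum>s\<in>UNIV. \<Sum>t. \<gamma> ^ t * state_dist p \<mu> pol t s * g s) =
      (\<Sum>t. \<Sum>s\<in>UNIV. \<gamma> ^ t * state_dist p \<mu> pol t s * g s)"
    using summable by (intro suminf_sum[symmetric] summable_mult2)
  finally show ?thesis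
    by (simp add: sum_distrib_left mult.assoc)
qed

lemma sum_abs_visit_diff_le_suminf:
  assumes "is_kernel p" and "is_policy \<pi>" and "is_policy \<pi>'" and "is_dist \<mu>"
    and "0 \<le> \<gamma>" and "\<gamma> < 1"
  shows "(\<Sum>s\<in>UNIV. \<bar>visit p \<mu> \<gamma> \<pi> s - visit p \<mu> \<gamma> \<pi>' s\<bar>) \<le>
         (1 - \<gamma>) * (\<Sum>t. \<gamma> ^ t * (\<Sum>s\<in>UNIV. \<bar>state_dist p \<mu> \<pi> t s - state_dist p \<mu> \<pi>' t s\<bar>))"
proof -
  define \<Delta> where "\<Delta> t s = state_dist p \<mu> \<pi> t s - state_dist p \<mu> \<pi>' t s" for t s
  have "\<bar>\<Delta> t s\<bar> \<le> 1" for t s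
  proof -
    have "is_dist (state_dist p \<mu> \<pi> t)" and "is_dist (state_dist p \<mu> \<pi>' t)"
      using assms(1-4) by (auto intro: is_dist_state_dist)
    then show ?thesis
      unfolding \<Delta>_def abs_le_iff
      using is_dist_nonneg[of _ s] is_dist_le_one[of _ s] by fastforce
  qed
  then have summable_abs: "summable (\<lambda>t. \<gamma> ^ t * \<bar>\<Delta> t s\<bar>)" for s
    using assms(5,6) by (intro summable_power_mult_bounded) auto
  have "\<bar>visit p \<mu> \<gamma> \<pi> s - visit p \<mu> \<gamma> \<pi>' s\<bar> \<le> (1 - \<gamma>) * (\<Sum>t. \<gamma> ^ t * \<bar>\<Delta> t s\<bar>)" for s
  proof -
    have "visit p \<mu> \<gamma> \<pi> s - visit p \<mu> \<gamma> \<pi>' s = (1 - \<gamma>) * (\<Sum>t. \<gamma> ^ t * \<Delta> t s)"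
      unfolding visit_def \<Delta>_def
      using summable_discounted_state_dist[OF assms(1,2,4-6)] summable_discounted_state_dist[OF assms(1,3-6)]
      by (simp add: suminf_diff[symmetric] right_diff_distrib)
    also have "\<bar>\<dots>\<bar> \<le> (1 - \<gamma>) * (\<Sum>t. \<gamma> ^ t * \<bar>\<Delta> t s\<bar>)"
      using summable_rabs[of "\<lambda>t. \<gamma> ^ t * \<Delta> t s"] summable_abs[of s] assms(5,6)
      by (simp add: abs_mult mult_left_mono)
    finally show ?thesis .
  qed
  then have "(\<Sum>s\<in>UNIV. \<bar>visit p \<mu> \<gamma> \<pi> s - visit p \<mu> \<gamma> \<pi>' s\<bar>) \<le>
      (1 - \<gamma>) * (\<Sum>s\<in>UNIV. \<Sum>t. \<gamma> ^ t * \<bar>\<Delta> t s\<bar>)"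
    by (simp add: sum_distrib_left sum_mono)
  also have "(\<Sum>s\<in>UNIV. \<Sum>t. \<gamma> ^ t * \<bar>\<Delta> t s\<bar>) = (\<Sum>t. \<gamma> ^ t * (\<Sum>s\<in>UNIV. \<bar>\<Delta> t s\<bar>))"
    using summable_abs by (simp add: suminf_sum[symmetric] sum_distrib_left)
  finally show ?thesis
    unfolding \<Delta>_def .
qed

lemma kernel_l1_contraction:
  fixes Y :: "'s::finite \<Rightarrow> 'a::finite \<Rightarrow> real"
  assumes "is_kernel p"
  shows "(\<Sum>s'\<in>UNIV. \<bar>\<Sum>s\<in>UNIV. \<Sum>a\<in>UNIV. Y s a * p s a s'\<bar>) \<le> (\<Sum>s\<in>UNIV. \<Sum>a\<in>UNIV. \<bar>Y s a\<bar>)"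
proof -
  have p_nonneg: "0 \<le> p s a s'" and p_sum: "(\<Sum>s'\<in>UNIV. p s a s') = 1" for s a s'
    using assms unfolding is_kernel_def is_dist_def by blast+
  have "(\<Sum>s'\<in>UNIV. \<bar>\<Sum>s\<in>UNIV. \<Sum>a\<in>UNIV. Y s a * p s a s'\<bar>) \<le>
      (\<Sum>s'\<in>UNIV. \<Sum>s\<in>UNIV. \<Sum>a\<in>UNIV. \<bar>Y s a\<bar> * p s a s')"
    using p_nonneg
    by (intro sum_mono order_trans[OF sum_abs] order_trans[OF sum_abs]) (simp add: abs_mult)
  also have "\<dots> = (\<Sum>s\<in>UNIV. \<Sum>a\<in>UNIV. \<Sum>s'\<in>UNIV. \<bar>Y s a\<bar> * p s a s')"
    by (subst sum.swap) (intro sum.cong refl sum.swap)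
  also have "\<dots> = (\<Sum>s\<in>UNIV. \<Sum>a\<in>UNIV. \<bar>Y s a\<bar>)"
    by (simp add: sum_distrib_left[symmetric] p_sum)
  finally show ?thesis .
qed

lemma state_dist_Suc_l1_diff_le:
  assumes "is_kernel p" and "is_policy \<pi>" and "is_policy \<pi>'" and "is_dist \<mu>"
  shows "(\<Sum>s\<in>UNIV. \<bar>state_dist p \<mu> \<pi> (Suc t) s - state_dist p \<mu> \<pi>' (Suc t) s\<bar>) \<le>
         (\<Sum>s\<in>UNIV. \<bar>state_dist p \<mu> \<pi> t s - state_dist p \<mu> \<pi>' t s\<bar>) +
         2 * (\<Sum>s\<in>UNIV. state_dist p \<mu> \<pi>' t s * TV \<pi> \<pi>' s)"
proof -
  define x where "x = state_dist p \<mu> \<pi> t"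
  define y where "y = state_dist p \<mu> \<pi>' t"
  have \<pi>_nonneg: "0 \<le> \<pi> s a" and \<pi>_sum: "(\<Sum>a\<in>UNIV. \<pi> s a) = 1" for s a
    using assms(2) unfolding is_policy_def is_dist_def by blast+
  have y_nonneg: "0 \<le> y s" for s
    unfolding y_def using assms(1,3,4) by (intro is_dist_nonneg is_dist_state_dist)
  have "(\<Sum>s'\<in>UNIV. \<bar>state_dist p \<mu> \<pi> (Suc t) s' - state_dist p \<mu> \<pi>' (Suc t) s'\<bar>) =
      (\<Sum>s'\<in>UNIV. \<bar>\<Sum>s\<in>UNIV. \<Sum>a\<in>UNIV. (x s * \<pi> s a - y s * \<pi>' s a) * p s a s'\<bar>)"
    unfolding x_def y_def by (simp only: state_dist.simps sum_subtractf[symmetric] left_diff_distrib)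
  also have "\<dots> \<le> (\<Sum>s\<in>UNIV. \<Sum>a\<in>UNIV. \<bar>x s * \<pi> s a - y s * \<pi>' s a\<bar>)"
    by (rule kernel_l1_contraction[OF assms(1)])
  also have "\<dots> \<le> (\<Sum>s\<in>UNIV. \<Sum>a\<in>UNIV. \<bar>x s - y s\<bar> * \<pi> s a + y s * \<bar>\<pi> s a - \<pi>' s a\<bar>)"
  proof (intro sum_mono)
    fix s a
    have "x s * \<pi> s a - y s * \<pi>' s a = (x s - y s) * \<pi> s a + y s * (\<pi> s a - \<pi>' s a)"
      by (simp add: algebra_simps)
    then have "\<bar>x s * \<pi> s a - y s * \<pi>' s a\<bar> \<le> \<bar>(x s - y s) * \<pi> s a\<bar> + \<bar>y s * (\<pi> s a - \<pi>' s a)\<bar>"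
      by (simp only: abs_triangle_ineq)
    also have "\<dots> = \<bar>x s - y s\<bar> * \<pi> s a + y s * \<bar>\<pi> s a - \<pi>' s a\<bar>"
      using \<pi>_nonneg[of s a] y_nonneg[of s] by (simp add: abs_mult)
    finally show "\<bar>x s * \<pi> s a - y s * \<pi>' s a\<bar> \<le> \<bar>x s - y s\<bar> * \<pi> s a + y s * \<bar>\<pi> s a - \<pi>' s a\<bar>" .
  qed
  also have "\<dots> = (\<Sum>s\<in>UNIV. \<bar>x s - y s\<bar>) + 2 * (\<Sum>s\<in>UNIV. y s * TV \<pi> \<pi>' s)"
    by (simp add: TV_def sum.distrib sum_distrib_left[symmetric] \<pi>_sum sum_distrib_right
        sum_divide_distrib[symmetric])
  finally show ?thesis
    unfolding x_def y_def .
qed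

lemma sum_abs_visit_diff_le_TV:
  assumes "is_kernel p" and "is_policy \<pi>" and "is_policy \<pi>'" and "is_dist \<mu>"
    and "0 \<le> \<gamma>" and "\<gamma> < 1"
  shows "(\<Sum>s\<in>UNIV. \<bar>visit p \<mu> \<gamma> \<pi> s - visit p \<mu> \<gamma> \<pi>' s\<bar>) \<le>
         2 * \<gamma> / (1 - \<gamma>) * (\<Sum>s\<in>UNIV. visit p \<mu> \<gamma> \<pi>' s * TV \<pi> \<pi>' s)"
proof -
  define n where "n t = (\<Sum>s\<in>UNIV. \<bar>state_dist p \<mu> \<pi> t s - state_dist p \<mu> \<pi>' t s\<bar>)" for t
  define c where "c t = (\<Sum>s\<in>UNIV. state_dist p \<mu> \<pi>' t s * (2 * TV \<pi> \<pi>' s))" for t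
  have "summable (\<lambda>t. \<gamma> ^ t * n t)"
    unfolding n_def using assms
    by (intro summable_power_mult_bounded[where B = 2]) (simp_all add: sum_abs_diff_dist_le_2 is_dist_state_dist)
  moreover have "summable (\<lambda>t. \<gamma> ^ t * c t)"
    unfolding c_def using assms(1,3-6) by (rule summable_discounted_expectation)
  moreover have "n (Suc t) \<le> n t + c t" for t
    using state_dist_Suc_l1_diff_le[OF assms(1-4), of t]
    by (simp add: n_def c_def sum_distrib_left mult.left_commute)
  ultimately have "(1 - \<gamma>) * (\<Sum>t. \<gamma> ^ t * n t) \<le> \<gamma> * (\<Sum>t. \<gamma> ^ t * c t)"
    using assms(5) by (intro discounted_suminf_le_of_step_le) (simp_all add: n_def)
  also have "\<dots> = 2 * \<gamma> / (1 - \<gamma>) * (\<Sum>s\<in>UNIV. visit p \<mu> \<gamma> \<pi>' s * TV \<pi> \<pi>' s)"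
  proof -
    have "2 * (\<Sum>s\<in>UNIV. visit p \<mu> \<gamma> \<pi>' s * TV \<pi> \<pi>' s) = (1 - \<gamma>) * (\<Sum>t. \<gamma> ^ t * c t)"
      using sum_visit_mult[OF assms(1,3-6), of "\<lambda>s. 2 * TV \<pi> \<pi>' s"]
      by (simp add: c_def sum_distrib_left mult.left_commute)
    then have "(\<Sum>t. \<gamma> ^ t * c t) = 2 / (1 - \<gamma>) * (\<Sum>s\<in>UNIV. visit p \<mu> \<gamma> \<pi>' s * TV \<pi> \<pi>' s)"
      using assms(6) by (simp add: field_simps)
    then show ?thesis
      by simp
  qed
  finally show ?thesis
    using sum_abs_visit_diff_le_suminf[OF assms] unfolding n_def by linarith
qed

lemma sum_policy_Adv_eq:
  assumes "is_policy \<pi>"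
  shows "(\<Sum>a\<in>UNIV. \<pi> s a * Adv p r \<gamma> \<pi>' s a) =
         (\<Sum>a\<in>UNIV. \<pi> s a * r s a)
         + \<gamma> * (\<Sum>a\<in>UNIV. \<pi> s a * (\<Sum>s'\<in>UNIV. p s a s' * V_fun p r \<gamma> \<pi>' s'))
         - V_fun p r \<gamma> \<pi>' s"
proof -
  have "(\<Sum>a\<in>UNIV. \<pi> s a) = 1"
    using assms unfolding is_policy_def is_dist_def by blast
  then show ?thesis
    unfolding Adv_def Q_fun_def
    by (simp add: algebra_simps sum_subtractf sum.distrib sum_distrib_left sum_distrib_right[symmetric])
qed

lemma performance_difference:
  assumes "is_kernel p" and "is_dist \<rho>0" and "0 \<le> \<gamma>" and "\<gamma> < 1"
    and "is_policy \<pi>" and "is_policy \<pi>'"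
  shows "J_obj p r \<rho>0 \<gamma> \<pi> - J_obj p r \<rho>0 \<gamma> \<pi>' =
         1 / (1 - \<gamma>) * (\<Sum>s\<in>UNIV. visit p \<rho>0 \<gamma> \<pi> s * (\<Sum>a\<in>UNIV. \<pi> s a * Adv p r \<gamma> \<pi>' s a))"
proof -
  define V where "V = V_fun p r \<gamma> \<pi>'"
  define E where "E g t = \<gamma> ^ t * (\<Sum>s\<in>UNIV. state_dist p \<rho>0 \<pi> t s * g s)" for g t
  define D where "D = E V"
  have summable_E: "summable (E g)" for g
    unfolding E_def using assms(1,5,2-4) by (rule summable_discounted_expectation)
  \<comment> \<open>Q-values of \<pi>' look one step ahead, so the advantages telescope in V along \<pi>'s trajectory.\<close>
  have step: "E (\<lambda>s. \<Sum>a\<in>UNIV. \<pi> s a * Adv p r \<gamma> \<pi>' s a) t =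
      E (\<lambda>s. \<Sum>a\<in>UNIV. \<pi> s a * r s a) t + (D (Suc t) - D t)" for t
    unfolding E_def D_def V_def sum_policy_Adv_eq[OF assms(5)] state_dist_Suc_expectation
    by (simp add: algebra_simps sum.distrib sum_subtractf sum_distrib_left)
  have "E (\<lambda>s. \<Sum>a\<in>UNIV. \<pi> s a * r s a) sums J_obj p r \<rho>0 \<gamma> \<pi>"
    using summable_E unfolding J_obj_def disc_return_eq_suminf_expectation E_def
    by (simp add: summable_sums)
  moreover have "(\<lambda>t. D (Suc t) - D t) sums (- J_obj p r \<rho>0 \<gamma> \<pi>')"
  proof -
    have "D \<longlonglongrightarrow> 0"
      unfolding D_def by (rule summable_LIMSEQ_zero[OF summable_E])
    moreover have "D 0 = J_obj p r \<rho>0 \<gamma> \<pi>'"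
      unfolding D_def E_def V_def J_obj_def disc_return_eq_sum_V_fun[OF assms(1,6,3,4)] by simp
    ultimately show ?thesis
      using telescope_sums[of D 0] by simp
  qed
  ultimately have "E (\<lambda>s. \<Sum>a\<in>UNIV. \<pi> s a * Adv p r \<gamma> \<pi>' s a) sums
      (J_obj p r \<rho>0 \<gamma> \<pi> + - J_obj p r \<rho>0 \<gamma> \<pi>')"
    unfolding step by (rule sums_add)
  then show ?thesis
    unfolding sum_visit_mult[OF assms(1,5,2-4)] E_def using assms(4) by (simp add: sums_iff)
qed

lemma sum_visit_importance_weighted:
  assumes "is_kernel p" and "is_dist \<mu>" and "0 \<le> \<gamma>" and "\<gamma> < 1" and "is_policy \<pi>'"
    and "\<forall>s a. visit p \<mu> \<gamma> \<pi>' s > 0 \<and> \<pi>' s a = 0 \<longrightarrow> \<pi> s a = 0"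
  shows "(\<Sum>s\<in>UNIV. \<Sum>a\<in>UNIV. visit p \<mu> \<gamma> \<pi>' s * \<pi>' s a * (\<pi> s a / \<pi>' s a * g s a)) =
         (\<Sum>s\<in>UNIV. visit p \<mu> \<gamma> \<pi>' s * (\<Sum>a\<in>UNIV. \<pi> s a * g s a))"
proof (intro sum.cong refl)
  fix s
  show "(\<Sum>a\<in>UNIV. visit p \<mu> \<gamma> \<pi>' s * \<pi>' s a * (\<pi> s a / \<pi>' s a * g s a)) =
      visit p \<mu> \<gamma> \<pi>' s * (\<Sum>a\<in>UNIV. \<pi> s a * g s a)"
  proof (cases "visit p \<mu> \<gamma> \<pi>' s = 0")
    case False
    then have "0 < visit p \<mu> \<gamma> \<pi>' s"
      using visit_nonneg[OF assms(1,5,2-4), of s] by linarith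
    then have "(\<Sum>a\<in>UNIV. \<pi>' s a * (\<pi> s a / \<pi>' s a * g s a)) = (\<Sum>a\<in>UNIV. \<pi> s a * g s a)"
      using assms(6) by (intro sum_importance_weighted) auto
    then show ?thesis
      by (simp only: mult.assoc sum_distrib_left[symmetric])
  qed simp
qed

theorem lemma3:
  fixes p :: "'s::finite \<Rightarrow> 'a::finite \<Rightarrow> 's \<Rightarrow> real"
    and r :: "'s \<Rightarrow> 'a \<Rightarrow> real"
    and \<rho>0 :: "'s \<Rightarrow> real"
    and \<gamma> :: real
    and \<pi> \<pi>k \<pi>ref :: "'s \<Rightarrow> 'a \<Rightarrow> real"
  assumes "is_kernel p" and "is_dist \<rho>0" and "0 \<le> \<gamma>" and "\<gamma> < 1"
    and "is_policy \<pi>" and "is_policy \<pi>k" and "is_policy \<pi>ref"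
    and "\<forall>s a. visit p \<rho>0 \<gamma> \<pi>ref s > 0 \<and> \<pi>ref s a = 0 \<longrightarrow> \<pi> s a = 0"
  shows "J_obj p r \<rho>0 \<gamma> \<pi> - J_obj p r \<rho>0 \<gamma> \<pi>k \<ge>
           1 / (1 - \<gamma>) * (\<Sum>s\<in>UNIV. \<Sum>a\<in>UNIV. visit p \<rho>0 \<gamma> \<pi>ref s * \<pi>ref s a *
                 (\<pi> s a / \<pi>ref s a * Adv p r \<gamma> \<pi>k s a))
         - 2 * \<gamma> * C_const p r \<gamma> \<pi> \<pi>k / (1 - \<gamma>)\<^sup>2 *
             (\<Sum>s\<in>UNIV. visit p \<rho>0 \<gamma> \<pi>ref s * TV \<pi> \<pi>ref s)"
proof -
  define f where "f s = (\<Sum>a\<in>UNIV. \<pi> s a * Adv p r \<gamma> \<pi>k s a)" for s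
  define C where "C = C_const p r \<gamma> \<pi> \<pi>k"
  define d d\<^sub>r where "d = visit p \<rho>0 \<gamma> \<pi>" and "d\<^sub>r = visit p \<rho>0 \<gamma> \<pi>ref"
  have f_le: "\<bar>f s\<bar> \<le> C" for s
    unfolding C_def C_const_def f_def by (rule Max_ge) auto
  have "(\<Sum>s\<in>UNIV. d\<^sub>r s * f s) - (\<Sum>s\<in>UNIV. d s * f s) \<le> C * (\<Sum>s\<in>UNIV. \<bar>d s - d\<^sub>r s\<bar>)"
    using abs_sum_mult_diff_le[where f = f and A = UNIV and a = d and b = d\<^sub>r, OF f_le] by linarith
  also have "\<dots> \<le> C * (2 * \<gamma> / (1 - \<gamma>) * (\<Sum>s\<in>UNIV. d\<^sub>r s * TV \<pi> \<pi>ref s))"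
    using order_trans[OF abs_ge_zero f_le] unfolding d_def d\<^sub>r_def
    by (intro mult_left_mono sum_abs_visit_diff_le_TV[OF assms(1,5,7,2-4)]) linarith
  finally have "1 / (1 - \<gamma>) * ((\<Sum>s\<in>UNIV. d\<^sub>r s * f s) - (\<Sum>s\<in>UNIV. d s * f s)) \<le>
      1 / (1 - \<gamma>) * (C * (2 * \<gamma> / (1 - \<gamma>) * (\<Sum>s\<in>UNIV. d\<^sub>r s * TV \<pi> \<pi>ref s)))"
    using assms(4) by (intro mult_left_mono) auto
  also have "\<dots> = 2 * \<gamma> * C / (1 - \<gamma>)\<^sup>2 * (\<Sum>s\<in>UNIV. d\<^sub>r s * TV \<pi> \<pi>ref s)"
    by (simp add: power2_eq_square)
  finally show ?thesis
    using performance_difference[OF assms(1-6), of r]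
      sum_visit_importance_weighted[OF assms(1-4,7,8), of "Adv p r \<gamma> \<pi>k"]
    unfolding d_def[symmetric] d\<^sub>r_def[symmetric] f_def[symmetric] C_def[symmetric]
    by (simp only: right_diff_distrib)
qed

end
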